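(* In the setting described in the context, suppose there is a compact interval $\Delta\subset\mathbb{R}$ such that for every $n\in\mathbb{N}_0$: (a) the polynomial $p_n$ has exactly $n$ simple zeros, all lying inside $\Delta$; (b) the zeros of $p_n$ and $p_{n+1}$ interlace. Then the matrix $J$ satisfies $\sup_{|i-j|\le R}|J_{i,j}|<\infty$ for every $R\ge0$.
   Context: Let $r\ge1$ and let $\mu_1,\dots,\mu_r$ be positive Borel measures on $\mathbb{R}$ with all moments finite, forming a perfect system: for every $\vec n\in\mathbb{N}_0^r$ there is a monic polynomial $P_{\vec n}$ of degree $|\vec n|=n_1+\dots+n_r$ with $\int x^kP_{\vec n}\,d\mu_j=0$ for $0\le k\le n_j-1$, $1\le j\le r$. Fix a path $(\vec n_\ell)_{\ell\ge0}$ with $|\vec n_\ell|=\ell$ and $\vec n_{\ell+1}=\vec n_\ell+\vec e_{i_\ell}$ ($\vec e_j$ the $j$-th unit vector, $i_\ell\in\{1,\dots,r\}$), and set $p_\ell=P_{\vec n_\ell}$. The matrix $J=[J_{\ell,k}]_{\ell,k\ge0}$ is defined by $xp_\ell=\sum_{k=0}^{\ell+1}J_{\ell,k}p_k$, with $J_{\ell,k}=0$ for $k>\ell+1$. *)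

theory Defs
  imports "HOL-Probability.Probability" "HOL-Computational_Algebra.Polynomial"
begin

text \<open>Multi-indices are functions nat => nat; only the components 1..r matter.\<close>

definition mi_size :: "nat \<Rightarrow> (nat \<Rightarrow> nat) \<Rightarrow> nat" where
  "mi_size r n = (\<Sum>j=1..r. n j)"

definition mop_typeII :: "nat \<Rightarrow> (nat \<Rightarrow> real measure) \<Rightarrow> (nat \<Rightarrow> nat) \<Rightarrow> real poly \<Rightarrow> bool" where
  "mop_typeII r \<mu> n P \<longleftrightarrow>
     lead_coeff P = 1 \<and> degree P = mi_size r n \<and>
     (\<forall>j\<in>{1..r}. \<forall>k<n j. (\<integral>x. x ^ k * poly P x \<partial>(\<mu> j)) = 0)"

definition moment_measure :: "real measure \<Rightarrow> bool" where
  "moment_measure M \<longleftrightarrow> sets M = sets borel \<and> (\<forall>k::nat. integrable M (\<lambda>x. x ^ k))"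

text \<open>The path: n_l(j) = number of steps k < l in direction j, so n_0 = 0 and
  n_(l+1) = n_l + e_(i l).\<close>
definition path_index :: "(nat \<Rightarrow> nat) \<Rightarrow> nat \<Rightarrow> (nat \<Rightarrow> nat)" where
  "path_index i l = (\<lambda>j. card {k. k < l \<and> i k = j})"

definition zeros_list :: "real poly \<Rightarrow> real list" where
  "zeros_list p = sorted_list_of_set {x. poly p x = 0}"

definition simple_zeros_in :: "real poly \<Rightarrow> nat \<Rightarrow> real set \<Rightarrow> bool" where
  "simple_zeros_in p n D \<longleftrightarrow> p \<noteq> 0 \<and> card {x. poly p x = 0} = n \<and>
     (\<forall>x. poly p x = 0 \<longrightarrow> order x p = 1 \<and> x \<in> D)"

definition interlace :: "real poly \<Rightarrow> real poly \<Rightarrow> bool" where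
  "interlace p q \<longleftrightarrow> length (zeros_list q) = length (zeros_list p) + 1 \<and>
     (\<forall>k < length (zeros_list p).
        zeros_list q ! k < zeros_list p ! k \<and> zeros_list p ! k < zeros_list q ! Suc k)"

end

theory Submission
  imports Defs "HOL-Computational_Algebra.Polynomial_FPS"
begin

(* Write Q_n(z) = z^n p_n(1/z) = \<Prod>(1 - x_k z), where x_1 < ... < x_n are the zeros of p_n.
   Reversing x p_l = \<Sum> J_{l,k} p_k gives Q_l = \<Sum> J_{l,k} z^(l+1-k) Q_k, so the coefficient
   of z^s in Q_l/Q_(l+1) is J_{l,l+1-s} plus a combination of the J_{l,l+1-j}, j < s, weighted by
   Taylor coefficients of Q_(l+1-j)/Q_(l+1).  By induction on s, every diagonal of J is bounded
   as soon as the Taylor coefficients of Q_n/Q_(n+d) are bounded uniformly in n.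
   For these use the weighted l1 norm \<Sum> |F_s| \<rho>^s with \<rho> max|\<Delta>| \<le> 1/2.  If
   y_1 < ... < y_(n+1) are the zeros of p_(n+1), each factor (1 - x_k z)/(1 - y_k z) of
   Q_n/Q_(n+1) has norm at most 1 + 2\<rho>(x_k - y_k), and by interlacing the gaps x_k - y_k add
   up to at most |\<Delta>|.  So Q_n/Q_(n+1) has norm at most 2 exp(2\<rho>|\<Delta>|), and by
   submultiplicativity Q_n/Q_(n+d) has norm at most the d-th power of that. *)

unbundle no vec_syntax
unbundle fps_syntax

(* Truncated at S so that it is finite for every power series; all bounds are uniform in S. *)
definition fps_wnorm :: "nat \<Rightarrow> real \<Rightarrow> 'a::real_normed_vector fps \<Rightarrow> real" where
  "fps_wnorm S \<rho> F = (\<Sum>s\<le>S. norm (F $ s) * \<rho> ^ s)"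

lemma fps_wnorm_nonneg: "0 \<le> \<rho> \<Longrightarrow> 0 \<le> fps_wnorm S \<rho> F"
  unfolding fps_wnorm_def by (intro sum_nonneg) auto

lemma fps_wnorm_one [simp]: "fps_wnorm S \<rho> (1 :: 'a::real_normed_algebra_1 fps) = 1"
  unfolding fps_wnorm_def by (induction S) auto

lemma norm_fps_nth_le_wnorm:
  "0 \<le> \<rho> \<Longrightarrow> t \<le> S \<Longrightarrow> norm (F $ t) * \<rho> ^ t \<le> fps_wnorm S \<rho> F"
  unfolding fps_wnorm_def by (rule member_le_sum[where f = "\<lambda>s. norm (F $ s) * \<rho> ^ s"]) auto

lemma fps_wnorm_mult:
  fixes F G :: "'a::real_normed_algebra fps"
  assumes "0 \<le> \<rho>"
  shows "fps_wnorm S \<rho> (F * G) \<le> fps_wnorm S \<rho> F * fps_wnorm S \<rho> G"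
proof -
  define a where "a i = norm (F $ i) * \<rho> ^ i" for i
  define b where "b i = norm (G $ i) * \<rho> ^ i" for i
  have ab_nonneg: "0 \<le> a i" "0 \<le> b i" for i
    using assms by (auto simp: a_def b_def)
  have "fps_wnorm S \<rho> (F * G) = (\<Sum>s\<le>S. norm (\<Sum>i\<le>s. F $ i * G $ (s - i)) * \<rho> ^ s)"
    unfolding fps_wnorm_def fps_mult_nth atLeast0AtMost ..
  also have "\<dots> \<le> (\<Sum>s\<le>S. \<Sum>i\<le>s. a i * b (s - i))"
  proof (rule sum_mono)
    fix s
    have "norm (\<Sum>i\<le>s. F $ i * G $ (s - i)) * \<rho> ^ s
        \<le> (\<Sum>i\<le>s. norm (F $ i) * norm (G $ (s - i))) * \<rho> ^ s"
      using assms by (intro mult_right_mono order.trans[OF norm_sum] sum_mono norm_mult_ineq) auto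
    also have "\<dots> = (\<Sum>i\<le>s. a i * b (s - i))"
      unfolding sum_distrib_right a_def b_def
      by (intro sum.cong refl) (auto simp: power_add[symmetric])
    finally show "norm (\<Sum>i\<le>s. F $ i * G $ (s - i)) * \<rho> ^ s \<le> (\<Sum>i\<le>s. a i * b (s - i))" .
  qed
  also have "\<dots> = (\<Sum>(i, j)\<in>{(i, j). i + j \<le> S}. a i * b j)"
    by (rule sum.triangle_reindex_eq[symmetric])
  also have "\<dots> \<le> (\<Sum>(i, j)\<in>{..S} \<times> {..S}. a i * b j)"
    by (rule sum_mono2) (auto simp: ab_nonneg)
  also have "\<dots> = fps_wnorm S \<rho> F * fps_wnorm S \<rho> G"
    by (simp add: fps_wnorm_def a_def b_def sum_product sum.cartesian_product)
  finally show ?thesis .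
qed

lemma fps_wnorm_prod:
  fixes f :: "'b \<Rightarrow> 'a::{real_normed_algebra_1, comm_ring_1} fps"
  assumes "0 \<le> \<rho>"
  shows "fps_wnorm S \<rho> (\<Prod>x\<in>A. f x) \<le> (\<Prod>x\<in>A. fps_wnorm S \<rho> (f x))"
proof (induction A rule: infinite_finite_induct)
  case (insert x A)
  have "fps_wnorm S \<rho> (f x * (\<Prod>x\<in>A. f x)) \<le> fps_wnorm S \<rho> (f x) * fps_wnorm S \<rho> (\<Prod>x\<in>A. f x)"
    by (rule fps_wnorm_mult[OF assms])
  also have "\<dots> \<le> fps_wnorm S \<rho> (f x) * (\<Prod>x\<in>A. fps_wnorm S \<rho> (f x))"
    by (intro mult_left_mono insert.IH fps_wnorm_nonneg assms)
  finally show ?case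
    using insert.hyps by simp
qed simp_all

lemma fps_inverse_one_minus_const_X:
  "inverse (1 - fps_const c * fps_X) = Abs_fps (\<lambda>s. c ^ s :: 'a::field)"
proof (rule fps_inverse_unique, rule fps_ext)
  fix n
  show "((1 - fps_const c * fps_X) * Abs_fps (\<lambda>s. c ^ s)) $ n = (1::'a fps) $ n"
    by (cases n) (auto simp: algebra_simps)
qed

lemma sum_power_le_2:
  fixes q :: real
  assumes "0 \<le> q" "q \<le> 1/2"
  shows "(\<Sum>k<n. q ^ k) \<le> 2"
proof -
  have "(\<Sum>k<n. q ^ k) = (1 - q ^ n) / (1 - q)"
    using sum_gp_strict[of q n] assms by simp
  also have "\<dots> \<le> 1 / (1 - q)"
    using assms by (intro divide_right_mono) auto
  also have "\<dots> \<le> 2"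
    using assms by (simp add: field_simps)
  finally show ?thesis .
qed

lemma fps_wnorm_geometric:
  fixes c :: "'a::real_normed_field"
  assumes "0 \<le> \<rho>" "norm c * \<rho> \<le> 1/2"
  shows "fps_wnorm S \<rho> (inverse (1 - fps_const c * fps_X)) \<le> 2"
proof -
  have "fps_wnorm S \<rho> (inverse (1 - fps_const c * fps_X)) = (\<Sum>k<Suc S. (norm c * \<rho>) ^ k)"
    unfolding fps_wnorm_def fps_inverse_one_minus_const_X lessThan_Suc_atMost
    by (simp add: norm_power power_mult_distrib)
  also have "\<dots> \<le> 2"
    using assms by (intro sum_power_le_2) auto
  finally show ?thesis .
qed

lemma fps_wnorm_linear_ratio:
  fixes x y :: "'a::real_normed_field"
  assumes "0 \<le> \<rho>" "norm y * \<rho> \<le> 1/2"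
  shows "fps_wnorm S \<rho> ((1 - fps_const x * fps_X) * inverse (1 - fps_const y * fps_X))
    \<le> 1 + 2 * \<rho> * norm (y - x)"
proof (cases S)
  case 0
  then show ?thesis
    using assms by (simp add: fps_wnorm_def fps_inverse_one_minus_const_X)
next
  case (Suc S')
  have nth_Suc: "((1 - fps_const x * fps_X) * inverse (1 - fps_const y * fps_X)) $ Suc s
      = (y - x) * y ^ s" for s
    unfolding fps_inverse_one_minus_const_X by (simp add: algebra_simps)
  have "fps_wnorm S \<rho> ((1 - fps_const x * fps_X) * inverse (1 - fps_const y * fps_X))
      = 1 + \<rho> * norm (y - x) * (\<Sum>s<Suc S'. (norm y * \<rho>) ^ s)"
    unfolding fps_wnorm_def Suc sum.atMost_Suc_shift lessThan_Suc_atMost nth_Suc sum_distrib_left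
    by (simp add: fps_inverse_one_minus_const_X norm_mult norm_power power_mult_distrib mult_ac)
  also have "\<dots> \<le> 1 + \<rho> * norm (y - x) * 2"
    using assms by (intro add_left_mono mult_left_mono sum_power_le_2) auto
  finally show ?thesis
    by simp
qed

lemma fps_wnorm_ratio_le_power:
  fixes Q :: "nat \<Rightarrow> 'a::real_normed_field fps"
  assumes "0 \<le> \<rho>" and Q0: "\<And>n. Q n $ 0 \<noteq> 0"
    and step: "\<And>n. fps_wnorm S \<rho> (Q n * inverse (Q (Suc n))) \<le> K"
  shows "fps_wnorm S \<rho> (Q n * inverse (Q (n + d))) \<le> K ^ d"
proof (induction d)
  case 0
  show ?case
    by (simp add: inverse_mult_eq_1' Q0)
next
  case (Suc d)
  have K_nonneg: "0 \<le> K"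
    using fps_wnorm_nonneg[OF assms(1)] step order.trans by blast
  have "inverse (Q (n + d)) * Q (n + d) = 1"
    by (rule inverse_mult_eq_1) (simp add: Q0)
  then have ratio_split: "Q n * inverse (Q (n + Suc d))
      = (Q n * inverse (Q (n + d))) * (Q (n + d) * inverse (Q (Suc (n + d))))"
    by (simp add: mult.assoc)
  have "fps_wnorm S \<rho> (Q n * inverse (Q (n + Suc d)))
      \<le> fps_wnorm S \<rho> (Q n * inverse (Q (n + d)))
        * fps_wnorm S \<rho> (Q (n + d) * inverse (Q (Suc (n + d))))"
    unfolding ratio_split by (rule fps_wnorm_mult[OF assms(1)])
  also have "\<dots> \<le> K ^ d * K"
    by (intro mult_mono Suc.IH step fps_wnorm_nonneg assms(1)) (simp add: K_nonneg)
  finally show ?case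
    by (simp add: mult_ac)
qed

lemma prod_root_factors_dvd:
  fixes p :: "'a::idom poly"
  assumes "finite Z" "\<And>z. z \<in> Z \<Longrightarrow> poly p z = 0"
  shows "(\<Prod>z\<in>Z. [:-z, 1:]) dvd p"
  using assms
proof (induction Z arbitrary: p rule: finite_induct)
  case (insert z Z)
  have "[:-z, 1:] dvd p"
    using insert.prems by (simp add: poly_eq_0_iff_dvd)
  then obtain q where q: "p = [:-z, 1:] * q"
    by (elim dvdE)
  have "poly q w = 0" if "w \<in> Z" for w
    using that insert.hyps(2) insert.prems[of w] q by auto
  then have "(\<Prod>z\<in>Z. [:-z, 1:]) dvd q"
    by (rule insert.IH)
  then show ?case
    unfolding q prod.insert[OF insert.hyps] by (rule mult_dvd_mono[OF dvd_refl])
qed simp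

lemma monic_poly_eq_prod_roots:
  fixes p :: "'a::idom poly"
  assumes "p \<noteq> 0" "lead_coeff p = 1" "card {x. poly p x = 0} = degree p"
  shows "p = (\<Prod>z\<in>{x. poly p x = 0}. [:-z, 1:])"
proof -
  let ?Z = "{x. poly p x = 0}"
  have fin: "finite ?Z"
    using poly_roots_finite[OF assms(1)] .
  obtain q where q: "p = (\<Prod>z\<in>?Z. [:-z, 1:]) * q"
    using prod_root_factors_dvd[OF fin] by (auto elim!: dvdE)
  have "q \<noteq> 0" "(\<Prod>z\<in>?Z. [:-z, 1:]) \<noteq> 0"
    using q assms(1) by auto
  then have "degree p = degree (\<Prod>z\<in>?Z. [:-z, 1:]) + degree q"
    by (subst q) (rule degree_mult_eq)
  moreover have "degree (\<Prod>z\<in>?Z. [:-z, 1:]) = card ?Z"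
    by (subst degree_prod_eq_sum_degree) (auto simp: fin)
  ultimately have "degree q = 0"
    using assms(3) by simp
  moreover have "lead_coeff q = 1"
    using assms(2) lead_coeff_mult[of "\<Prod>z\<in>?Z. [:-z, 1:]" q] by (simp add: lead_coeff_prod flip: q)
  ultimately show ?thesis
    using q by (metis degree_0_id mult.right_neutral one_pCons)
qed

lemma length_zeros_list: "p \<noteq> 0 \<Longrightarrow> length (zeros_list p) = card {x. poly p x = 0}"
  and set_zeros_list: "p \<noteq> 0 \<Longrightarrow> set (zeros_list p) = {x. poly p x = 0}"
  and distinct_zeros_list: "distinct (zeros_list p)"
  by (simp_all add: zeros_list_def poly_roots_finite)

definition fps_root_prod :: "'a::comm_ring_1 list \<Rightarrow> 'a fps" where
  "fps_root_prod xs = (\<Prod>k<length xs. 1 - fps_const (xs ! k) * fps_X)"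

lemma fps_of_reflect_root_factor:
  "fps_of_poly (reflect_poly [:-z, 1:]) = 1 - fps_const (z::'a::comm_ring_1) * fps_X"
proof -
  have "reflect_poly [:-z, 1:] = [:1, -z:]"
    by (cases "z = 0") (simp_all add: reflect_poly_def)
  then show ?thesis
    by (simp add: fps_of_poly_pCons algebra_simps)
qed

lemma fps_of_reflect_poly_eq_root_prod:
  fixes p :: "real poly"
  assumes "p \<noteq> 0" "lead_coeff p = 1" "card {x. poly p x = 0} = degree p"
  shows "fps_of_poly (reflect_poly p) = fps_root_prod (zeros_list p)"
proof -
  let ?xs = "zeros_list p"
  have "p = (\<Prod>z\<in>set ?xs. [:-z, 1:])"
    using monic_poly_eq_prod_roots[OF assms] set_zeros_list[OF assms(1)] by simp
  also have "\<dots> = (\<Prod>k<length ?xs. [:-(?xs ! k), 1:])"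
    using bij_betw_nth[OF distinct_zeros_list refl refl, of p]
    by (rule prod.reindex_bij_betw[symmetric])
  finally have "fps_of_poly (reflect_poly p)
      = fps_of_poly (reflect_poly (\<Prod>k<length ?xs. [:-(?xs ! k), 1:]))"
    by (rule arg_cong)
  also have "\<dots> = fps_root_prod ?xs"
    by (simp add: fps_root_prod_def reflect_poly_prod fps_of_poly_prod fps_of_reflect_root_factor)
  finally show ?thesis .
qed

lemma fps_wnorm_root_prod_ratio_interlacing:
  fixes xs ys :: "real list"
  assumes len: "length ys = Suc (length xs)"
    and inter: "\<And>k. k < length xs \<Longrightarrow> ys ! k < xs ! k \<and> xs ! k < ys ! Suc k"
    and ys: "set ys \<subseteq> {a..b}"
    and \<rho>: "0 \<le> \<rho>" "\<And>z. z \<in> {a..b} \<Longrightarrow> \<bar>z\<bar> * \<rho> \<le> 1/2"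
  shows "fps_wnorm S \<rho> (fps_root_prod xs * inverse (fps_root_prod ys))
    \<le> 2 * exp (2 * \<rho> * (b - a))"
proof -
  let ?n = "length xs"
  let ?F = "\<lambda>z. 1 - fps_const z * fps_X"
  let ?d = "\<lambda>k. 2 * \<rho> * (xs ! k - ys ! k)"
  have y_small: "\<bar>ys ! k\<bar> * \<rho> \<le> 1/2" if "k \<le> ?n" for k
    using that len ys \<rho>(2) by (simp add: subset_iff)
  have d_nonneg: "0 \<le> ?d k" if "k < ?n" for k
    using that inter[of k] \<rho>(1) by simp
  have factors: "fps_root_prod xs * inverse (fps_root_prod ys)
      = (\<Prod>k<?n. ?F (xs ! k) * inverse (?F (ys ! k))) * inverse (?F (ys ! ?n))"
    unfolding fps_root_prod_def len prod.lessThan_Suc prod.distrib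
    by (simp add: fps_inverse_mult inverse_prod_fps mult_ac)
  have "fps_wnorm S \<rho> (fps_root_prod xs * inverse (fps_root_prod ys))
      \<le> fps_wnorm S \<rho> (\<Prod>k<?n. ?F (xs ! k) * inverse (?F (ys ! k)))
        * fps_wnorm S \<rho> (inverse (?F (ys ! ?n)))"
    unfolding factors by (rule fps_wnorm_mult[OF \<rho>(1)])
  also have "\<dots> \<le> (\<Prod>k<?n. fps_wnorm S \<rho> (?F (xs ! k) * inverse (?F (ys ! k))))
        * fps_wnorm S \<rho> (inverse (?F (ys ! ?n)))"
    by (intro mult_right_mono fps_wnorm_prod fps_wnorm_nonneg \<rho>(1))
  also have "\<dots> \<le> (\<Prod>k<?n. 1 + ?d k) * 2"
  proof (intro mult_mono prod_mono conjI fps_wnorm_nonneg fps_wnorm_geometric prod_nonneg)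
    fix k assume "k \<in> {..<?n}"
    then show "fps_wnorm S \<rho> (?F (xs ! k) * inverse (?F (ys ! k))) \<le> 1 + ?d k"
      using fps_wnorm_linear_ratio[OF \<rho>(1), of "ys ! k" S "xs ! k"] y_small[of k] inter[of k]
      by simp
  qed (use \<rho>(1) y_small d_nonneg in \<open>auto intro: add_nonneg_nonneg\<close>)
  also have "(\<Prod>k<?n. 1 + ?d k) \<le> exp (\<Sum>k<?n. ?d k)"
    using d_nonneg by (intro prod_le_exp_sum) simp
  also have "(\<Sum>k<?n. ?d k) \<le> 2 * \<rho> * (b - a)"
  proof -
    have "(\<Sum>k<?n. xs ! k - ys ! k) \<le> (\<Sum>k<?n. ys ! Suc k - ys ! k)"
      using inter by (intro sum_mono) (simp add: less_imp_le)
    also have "\<dots> = ys ! ?n - ys ! 0"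
      by (rule sum_lessThan_telescope)
    also have "\<dots> \<le> b - a"
      using subsetD[OF ys nth_mem[of ?n ys]] subsetD[OF ys nth_mem[of 0 ys]] len by auto
    finally show ?thesis
      using \<rho>(1) by (simp add: sum_distrib_left[symmetric] mult_left_mono)
  qed
  finally show ?thesis
    by simp
qed

lemma fps_wnorm_reflect_ratio_interlacing:
  fixes p q :: "real poly"
  assumes "lead_coeff p = 1" "lead_coeff q = 1"
    and "simple_zeros_in p (degree p) {a..b}" "simple_zeros_in q (degree q) {a..b}"
    and "interlace p q"
    and "0 \<le> \<rho>" "\<And>z. z \<in> {a..b} \<Longrightarrow> \<bar>z\<bar> * \<rho> \<le> 1/2"
  shows "fps_wnorm S \<rho> (fps_of_poly (reflect_poly p) * inverse (fps_of_poly (reflect_poly q)))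
    \<le> 2 * exp (2 * \<rho> * (b - a))"
proof -
  have "p \<noteq> 0" "q \<noteq> 0" "set (zeros_list q) \<subseteq> {a..b}"
    using assms(3,4) set_zeros_list[of q] by (auto simp: simple_zeros_in_def)
  then show ?thesis
    using assms
    by (auto simp: fps_of_reflect_poly_eq_root_prod simple_zeros_in_def interlace_def
        intro!: fps_wnorm_root_prod_ratio_interlacing)
qed

definition fps_reversal :: "nat \<Rightarrow> 'a::zero poly \<Rightarrow> 'a fps" where
  "fps_reversal m f = Abs_fps (\<lambda>s. if s \<le> m then coeff f (m - s) else 0)"

lemma fps_reversal_sum:
  "fps_reversal m (\<Sum>k\<in>A. smult (c k) (f k)) = (\<Sum>k\<in>A. fps_const (c k) * fps_reversal m (f k))"
  by (rule fps_ext) (simp add: fps_reversal_def fps_sum_nth coeff_sum)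

lemma fps_reversal_eq_reflect_poly:
  fixes f :: "'a::comm_semiring_1 poly"
  assumes "degree f \<le> m"
  shows "fps_reversal m f = fps_X ^ (m - degree f) * fps_of_poly (reflect_poly f)"
  using assms
  by (intro fps_ext) (auto simp: fps_reversal_def fps_X_power_mult_nth coeff_reflect_poly coeff_eq_0)

lemma fps_reversal_monom_mult:
  fixes f :: "'a::comm_semiring_1 poly"
  shows "fps_reversal (Suc m) ([:0, 1:] * f) = fps_reversal m f"
  by (rule fps_ext) (auto simp: fps_reversal_def Suc_diff_le)

lemma fps_of_reflect_poly_recurrence:
  fixes p :: "nat \<Rightarrow> 'a::comm_ring_1 poly"
  assumes deg: "\<And>k. degree (p k) = k"
    and rec: "[:0, 1:] * p l = (\<Sum>k\<le>Suc l. smult (c k) (p k))"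
  shows "fps_of_poly (reflect_poly (p l))
    = (\<Sum>k\<le>Suc l. fps_const (c k) * (fps_X ^ (Suc l - k) * fps_of_poly (reflect_poly (p k))))"
proof -
  have "fps_of_poly (reflect_poly (p l)) = fps_reversal (Suc l) ([:0, 1:] * p l)"
    unfolding fps_reversal_monom_mult by (simp add: fps_reversal_eq_reflect_poly deg)
  also have "\<dots> = (\<Sum>k\<le>Suc l. fps_const (c k) * fps_reversal (Suc l) (p k))"
    unfolding rec by (rule fps_reversal_sum)
  finally show ?thesis
    by (simp add: fps_reversal_eq_reflect_poly deg)
qed

lemma fps_nth_ratio_recurrence:
  fixes Q :: "nat \<Rightarrow> 'a::field fps" and J :: "nat \<Rightarrow> 'a"
  assumes Q0: "\<And>n. Q n $ 0 = 1"
    and rec: "Q l = (\<Sum>k\<le>Suc l. fps_const (J k) * (fps_X ^ (Suc l - k) * Q k))"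
    and s: "s \<le> Suc l"
  shows "(Q l * inverse (Q (Suc l))) $ s
    = J (Suc l - s) + (\<Sum>j<s. J (Suc l - j) * (Q (Suc l - j) * inverse (Q (Suc l))) $ (s - j))"
proof -
  define m where "m = Suc l"
  define G where "G k = Q k * inverse (Q m)" for k
  have "Q l * inverse (Q m) = (\<Sum>k\<le>m. fps_const (J k) * (fps_X ^ (m - k) * Q k)) * inverse (Q m)"
    unfolding m_def by (rule arg_cong[where f = "\<lambda>F. F * inverse (Q (Suc l))", OF rec])
  also have "\<dots> = (\<Sum>k\<le>m. fps_const (J k) * (fps_X ^ (m - k) * G k))"
    unfolding sum_distrib_right G_def by (simp only: mult.assoc)
  finally have "(Q l * inverse (Q m)) $ s
      = (\<Sum>k\<le>m. J k * (if s < m - k then 0 else G k $ (s - (m - k))))"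
    by (simp add: fps_sum_nth fps_X_power_mult_nth)
  also have "\<dots> = (\<Sum>j\<le>m. J (m - j) * (if s < j then 0 else G (m - j) $ (s - j)))"
    unfolding atLeast0AtMost[symmetric]
    by (subst sum.atLeastAtMost_rev) (intro sum.cong refl, simp)
  also have "\<dots> = (\<Sum>j\<le>s. J (m - j) * G (m - j) $ (s - j))"
    by (rule sum.mono_neutral_cong_right) (use s in \<open>auto simp: m_def\<close>)
  also have "\<dots> = (\<Sum>j<s. J (m - j) * G (m - j) $ (s - j)) + J (m - s)"
    by (simp add: lessThan_Suc_atMost[symmetric] G_def Q0)
  finally show ?thesis
    by (simp add: m_def G_def)
qed

lemma bounded_diagonals_of_recurrence:
  fixes Q :: "nat \<Rightarrow> real fps" and J :: "nat \<Rightarrow> nat \<Rightarrow> real"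
  assumes Q0: "\<And>n. Q n $ 0 = 1"
    and rec: "\<And>l. Q l = (\<Sum>k\<le>Suc l. fps_const (J l k) * (fps_X ^ (Suc l - k) * Q k))"
    and ratio: "\<And>n d t. \<bar>(Q n * inverse (Q (n + d))) $ t\<bar> \<le> C d t"
  shows "\<exists>B\<ge>0. \<forall>j<s. \<forall>l. j \<le> Suc l \<longrightarrow> \<bar>J l (Suc l - j)\<bar> \<le> B"
proof (induction s)
  case (Suc s)
  then obtain B where B: "0 \<le> B" "\<And>j l. j < s \<Longrightarrow> j \<le> Suc l \<Longrightarrow> \<bar>J l (Suc l - j)\<bar> \<le> B"
    by blast
  define B' where "B' = C 1 s + (\<Sum>j<s. B * C j (s - j))"
  have "\<bar>J l (Suc l - s)\<bar> \<le> B'" if s: "s \<le> Suc l" for l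
  proof -
    let ?G = "\<lambda>j. (Q (Suc l - j) * inverse (Q (Suc l))) $ (s - j)"
    have "J l (Suc l - s) = (Q l * inverse (Q (Suc l))) $ s - (\<Sum>j<s. J l (Suc l - j) * ?G j)"
      using fps_nth_ratio_recurrence[OF Q0 rec s] by simp
    then have "\<bar>J l (Suc l - s)\<bar>
        \<le> \<bar>(Q l * inverse (Q (Suc l))) $ s\<bar> + \<bar>\<Sum>j<s. J l (Suc l - j) * ?G j\<bar>"
      by (simp add: abs_triangle_ineq4)
    also have "\<dots>
        \<le> \<bar>(Q l * inverse (Q (Suc l))) $ s\<bar> + (\<Sum>j<s. \<bar>J l (Suc l - j)\<bar> * \<bar>?G j\<bar>)"
      unfolding abs_mult[symmetric] by (intro add_left_mono sum_abs)
    also have "\<dots> \<le> B'"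
      unfolding B'_def
    proof (intro add_mono sum_mono mult_mono)
      show "\<bar>(Q l * inverse (Q (Suc l))) $ s\<bar> \<le> C 1 s"
        using ratio[of l 1 s] by simp
      fix j assume j: "j \<in> {..<s}"
      then show "\<bar>J l (Suc l - j)\<bar> \<le> B"
        using B(2)[of j l] s by simp
      show "\<bar>?G j\<bar> \<le> C j (s - j)"
        using ratio[of "Suc l - j" j "s - j"] j s by simp
    qed (use B(1) in auto)
    finally show ?thesis .
  qed
  then show ?case
    using B by (intro exI[of _ "max B B'"]) (auto simp: less_Suc_eq le_max_iff_disj)
qed (rule exI[of _ 0], simp)

lemma bdd_above_band_of_diagonals:
  fixes J :: "nat \<Rightarrow> nat \<Rightarrow> real"
  assumes upper: "\<And>l k. Suc l < k \<Longrightarrow> J l k = 0"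
    and diag: "\<And>s. \<exists>B\<ge>0. \<forall>j<s. \<forall>l. j \<le> Suc l \<longrightarrow> \<bar>J l (Suc l - j)\<bar> \<le> B"
  shows "bdd_above {\<bar>J l k\<bar> | l k. \<bar>int l - int k\<bar> \<le> int R}"
proof -
  obtain B where
    B: "0 \<le> B" "\<And>j l. j < R + 2 \<Longrightarrow> j \<le> Suc l \<Longrightarrow> \<bar>J l (Suc l - j)\<bar> \<le> B"
    using diag[of "R + 2"] by blast
  have "\<bar>J l k\<bar> \<le> B" if "\<bar>int l - int k\<bar> \<le> int R" for l k
  proof (cases "Suc l < k")
    case False
    then show ?thesis
      using B(2)[of "Suc l - k" l] that by (simp add: Suc_diff_le)
  qed (use upper B in auto)
  then show ?thesis
    by (intro bdd_aboveI[where M = B]) auto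
qed

lemma path_index_Suc:
  "path_index i (Suc n) j = path_index i n j + (if i n = j then 1 else 0)"
proof -
  have "{k. k < Suc n \<and> i k = j} = {k. k < n \<and> i k = j} \<union> (if i n = j then {n} else {})"
    by (auto simp: less_Suc_eq)
  then show ?thesis
    unfolding path_index_def by (auto simp: card_insert_if)
qed

lemma mi_size_path_index:
  assumes "\<And>l. i l \<in> {1..r}"
  shows "mi_size r (path_index i n) = n"
proof (induction n)
  case 0
  then show ?case
    by (simp add: mi_size_def path_index_def)
next
  case (Suc n)
  have "(\<Sum>j=1..r. if i n = j then 1 else 0) = (1::nat)"
    using assms[of n] by (simp add: sum.delta')
  then show ?case
    using Suc by (simp add: mi_size_def path_index_Suc sum.distrib)
qed

theorem theorem3:
  fixes r :: nat and \<mu> :: "nat \<Rightarrow> real measure"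
    and P :: "(nat \<Rightarrow> nat) \<Rightarrow> real poly"
    and i :: "nat \<Rightarrow> nat" and J :: "nat \<Rightarrow> nat \<Rightarrow> real"
    and a b :: real
  assumes r: "r \<ge> 1"
    and meas: "\<And>j. j \<in> {1..r} \<Longrightarrow> moment_measure (\<mu> j)"
    and perfect: "\<And>n. mop_typeII r \<mu> n (P n)"
    and path: "\<And>l. i l \<in> {1..r}"
    and J_exp: "\<And>l. [:0, 1:] * P (path_index i l)
                 = (\<Sum>k\<le>Suc l. smult (J l k) (P (path_index i k)))"
    and J_zero: "\<And>l k. k > Suc l \<Longrightarrow> J l k = 0"
    and ab: "a \<le> b"
    and zeros: "\<And>n. simple_zeros_in (P (path_index i n)) n {a..b}"
    and inter: "\<And>n. interlace (P (path_index i n)) (P (path_index i (Suc n)))"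
  shows "\<forall>R::nat. bdd_above {\<bar>J l k\<bar> | l k. \<bar>int l - int k\<bar> \<le> int R}"
proof -
  define p where "p n = P (path_index i n)" for n
  have deg: "degree (p n) = n" and monic: "lead_coeff (p n) = 1" for n
    using perfect[of "path_index i n"] mi_size_path_index[OF path]
    by (auto simp: p_def mop_typeII_def)
  define Q where "Q n = fps_of_poly (reflect_poly (p n))" for n
  have Q0: "Q n $ 0 = 1" for n
    by (simp add: Q_def monic)
  define \<rho> where "\<rho> = 1 / (2 * (\<bar>a\<bar> + \<bar>b\<bar> + 1))"
  have \<rho>: "0 < \<rho>" "\<And>z. z \<in> {a..b} \<Longrightarrow> \<bar>z\<bar> * \<rho> \<le> 1/2"
    by (auto simp: \<rho>_def field_simps)
  define K where "K = 2 * exp (2 * \<rho> * (b - a))"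
  have "fps_wnorm S \<rho> (Q n * inverse (Q (Suc n))) \<le> K" for S n
    unfolding Q_def K_def using zeros inter deg monic \<rho>
    by (intro fps_wnorm_reflect_ratio_interlacing) (auto simp: p_def)
  then have wnorm_ratio: "fps_wnorm t \<rho> (Q n * inverse (Q (n + d))) \<le> K ^ d" for t n d
    using \<rho>(1) Q0 by (intro fps_wnorm_ratio_le_power) auto
  have ratio: "\<bar>(Q n * inverse (Q (n + d))) $ t\<bar> \<le> K ^ d / \<rho> ^ t" for n d t
    using order.trans[OF norm_fps_nth_le_wnorm[of \<rho> t t] wnorm_ratio] \<rho>(1)
    by (simp add: pos_le_divide_eq)
  have rec: "Q l = (\<Sum>k\<le>Suc l. fps_const (J l k) * (fps_X ^ (Suc l - k) * Q k))" for l
    unfolding Q_def using deg J_exp[folded p_def] by (rule fps_of_reflect_poly_recurrence)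
  have "\<exists>B\<ge>0. \<forall>j<s. \<forall>l. j \<le> Suc l \<longrightarrow> \<bar>J l (Suc l - j)\<bar> \<le> B" for s
    by (rule bounded_diagonals_of_recurrence[OF Q0 rec ratio])
  then show ?thesis
    using J_zero by (intro allI bdd_above_band_of_diagonals)
qed

end
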